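(* Let $1\le p<\infty$, $N\ge2$, and for $1\le i\le N$ let $T_i=T_{f_i,\omega^{(i)}}$ be unilateral pseudo-shifts on $\ell^p(\mathbb{N})$ with maps $f_i$ and weights $\omega^{(i)}=(w^{(i)}_{f_i(m)})_m$, and $W^{(i)}_{m,n}=\prod_{\nu=1}^nw^{(i)}_{f_i^\nu(m)}$. Let $n,M\in\mathbb{N}$ and let $x_i=\sum_{m=1}^Ma^{(i)}_me_m$ ($1\le i\le N$) with $a^{(i)}_1,\dots,a^{(i)}_M\neq0$, and put $\Gamma=\max\{\|x_i\|:1\le i\le N\}$. Then there exists $z\in\operatorname{span}\{e_m:m\in\mathbb{N}\}$ such that $\|z\|\le MN\Gamma\max\{|W^{(\ell)}_{m,n}|^{-1}:1\le\ell\le N,\,1\le m\le M\}$, $\|T_1^nz-x_1\|\le MN\Gamma\max\left\{\left|\frac{W^{(1)}_{f_1^{-n}(j),n}}{W^{(\ell)}_{f_\ell^{-n}(j),n}}\right|:2\le\ell\le N,\ j\in f_\ell^n([M])\cap f_1^n(\mathbb{N}\setminus[M])\right\}$, and for each $2\le i\le N$, $\|T_i^nz-x_i\|\le MN\Gamma\max\left\{\left|\frac{W^{(i)}_{f_i^{-n}(j),n}}{W^{(\ell)}_{f_\ell^{-n}(j),n}}-\frac{a^{(i)}_{f_i^{-n}(j)}}{a^{(\ell)}_{f_\ell^{-n}(j)}}\right|:1\le\ell\le i-1,\ j\in f_\ell^n([M])\cap f_i^n([M])\right\}+MN\Gamma\max\left\{\left|\frac{W^{(i)}_{f_i^{-n}(j),n}}{W^{(\ell)}_{f_\ell^{-n}(j),n}}\right|:\ell\neq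 i,\ j\in f_\ell^n([M])\cap f_i^n(\mathbb{N}\setminus[M])\right\}$.
   Context: $\mathbb{N}=\{1,2,\dots\}$; $\{e_m\}$ is the canonical basis of $\ell^p(\mathbb{N})$ over $\mathbb{K}\in\{\mathbb{R},\mathbb{C}\}$. For a strictly increasing $f:\mathbb{N}\to\mathbb{N}$ with $f(1)>1$ and a bounded, nonzero sequence of scalars $\omega=(w_{f(m)})_{m\in\mathbb{N}}$, the unilateral pseudo-shift is $T_{f,\omega}(\sum_m\alpha_me_m)=\sum_mw_{f(m)}\alpha_{f(m)}e_m$. $[M]=\{1,\dots,M\}$, $f^n$ is the $n$-fold composition, $f(A)=\{f(m):m\in A\}$, $f^{-n}$ is the inverse of $f^n$ on $f^n(\mathbb{N})$. The maximum of an empty set is taken to be $0$. *)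

theory Defs
  imports "HOL-Analysis.Analysis"
begin

text \<open>Sequences on \<nat> = {1,2,...} are modelled as functions nat => 'a; index 0 is unused.\<close>

definition lp_norm :: "real \<Rightarrow> (nat \<Rightarrow> 'a::real_normed_vector) \<Rightarrow> real" where
  "lp_norm p x = (\<Sum>\<^sub>\<infinity> m\<in>{1..}. norm (x m) powr p) powr (1 / p)"

definition in_span_basis :: "(nat \<Rightarrow> 'a::zero) \<Rightarrow> bool" where
  "in_span_basis z \<longleftrightarrow> z 0 = 0 \<and> finite {m. z m \<noteq> 0}"

definition pseudo_shift :: "(nat \<Rightarrow> nat) \<Rightarrow> (nat \<Rightarrow> 'a::field) \<Rightarrow> (nat \<Rightarrow> 'a) \<Rightarrow> (nat \<Rightarrow> 'a)" where
  "pseudo_shift f w x = (\<lambda>m. if 1 \<le> m then w (f m) * x (f m) else 0)"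

definition pseudo_shift_data :: "(nat \<Rightarrow> nat) \<Rightarrow> (nat \<Rightarrow> 'a::real_normed_field) \<Rightarrow> bool" where
  "pseudo_shift_data f w \<longleftrightarrow> strict_mono_on {1..} f \<and> f 1 > 1 \<and>
     bounded ((\<lambda>m. w (f m)) ` {1..}) \<and> (\<forall>m\<ge>1. w (f m) \<noteq> 0)"

definition Wprod :: "(nat \<Rightarrow> nat) \<Rightarrow> (nat \<Rightarrow> 'a::comm_monoid_mult) \<Rightarrow> nat \<Rightarrow> nat \<Rightarrow> 'a" where
  "Wprod f w m n = (\<Prod>\<nu>=1..n. w ((f ^^ \<nu>) m))"

definition finv :: "(nat \<Rightarrow> nat) \<Rightarrow> nat \<Rightarrow> nat \<Rightarrow> nat" where
  "finv f n j = inv_into {1..} (f ^^ n) j"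

definition Max0 :: "real set \<Rightarrow> real" where
  "Max0 S = (if S = {} then 0 else Max S)"

end

theory Submission
  imports Defs
begin

(* Let U be the union of the sets f_i^n([M]). A coordinate j in U is assigned to the least
   l with j in f_l^n([M]), and z_j := a^(l)_k / W^(l)_(k,n) with k = f_l^(-n)(j); since
   (T_l^n z)_k = W^(l)_(k,n) z_(f_l^n(k)), this makes T_l^n z reproduce x_l at k. For each i the
   vector T_i^n z - x_i is supported on the at most MN indices k with f_i^n(k) in U; there it
   vanishes when i owns f_i^n(k), and otherwise equals a^(l)_k' (W^(i)/W^(l) - a^(i)_k/a^(l)_k')
   for the owner l, where l < i if k <= M and a^(i)_k = 0 if k > M. So every coordinate is at most
   Gamma times the relevant maximum, and a vector with at most MN nonzero coordinates of modulus
   at most c has l^p norm at most MN c. *)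

lemma lp_norm_nonneg: "0 \<le> lp_norm p y"
  by (simp add: lp_norm_def)

lemma lp_norm_finite_support:
  fixes y :: "nat \<Rightarrow> 'a::real_normed_vector"
  assumes "finite S" "S \<subseteq> {1..}" "\<And>k. 1 \<le> k \<Longrightarrow> k \<notin> S \<Longrightarrow> y k = 0"
  shows "lp_norm p y = (\<Sum>m\<in>S. norm (y m) powr p) powr (1 / p)"
proof -
  have "(\<Sum>\<^sub>\<infinity> m\<in>{1..}. norm (y m) powr p) = (\<Sum>\<^sub>\<infinity> m\<in>S. norm (y m) powr p)"
    by (rule infsum_cong_neutral) (use assms in auto)
  then show ?thesis
    unfolding lp_norm_def using assms(1) by simp
qed

lemma norm_le_lp_norm:
  fixes y :: "nat \<Rightarrow> 'a::real_normed_vector"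
  assumes p: "1 \<le> p" and S: "finite S" "S \<subseteq> {1..}"
    and supp: "\<And>k. 1 \<le> k \<Longrightarrow> k \<notin> S \<Longrightarrow> y k = 0" and k: "k \<in> S"
  shows "norm (y k) \<le> lp_norm p y"
proof -
  have "norm (y k) powr p \<le> (\<Sum>m\<in>S. norm (y m) powr p)"
    by (rule member_le_sum) (use S k in auto)
  then have "(norm (y k) powr p) powr (1 / p) \<le> (\<Sum>m\<in>S. norm (y m) powr p) powr (1 / p)"
    by (rule powr_mono2[rotated 2]) (use p in auto)
  moreover have "(norm (y k) powr p) powr (1 / p) = norm (y k)"
    using p by (cases "y k = 0") (auto simp: powr_powr)
  ultimately show ?thesis
    using lp_norm_finite_support[OF S supp] by simp
qed

lemma lp_norm_le_card_mult:
  fixes y :: "nat \<Rightarrow> 'a::real_normed_vector"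
  assumes p: "1 \<le> p" and S: "finite S" "S \<subseteq> {1..}" and card: "card S \<le> K"
    and supp: "\<And>k. 1 \<le> k \<Longrightarrow> k \<notin> S \<Longrightarrow> y k = 0"
    and bound: "\<And>k. k \<in> S \<Longrightarrow> norm (y k) \<le> c" and c: "0 \<le> c"
  shows "lp_norm p y \<le> real K * c"
proof -
  have "(\<Sum>m\<in>S. norm (y m) powr p) \<le> (\<Sum>m\<in>S. c powr p)"
    by (rule sum_mono) (use bound p in \<open>auto intro: powr_mono2\<close>)
  also have "\<dots> \<le> real K * c powr p"
    using card by (simp add: mult_right_mono)
  finally have "(\<Sum>m\<in>S. norm (y m) powr p) powr (1 / p) \<le> (real K * c powr p) powr (1 / p)"
    by (rule powr_mono2[rotated 2]) (use p in \<open>auto intro: sum_nonneg\<close>)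
  then have "lp_norm p y \<le> (real K * c powr p) powr (1 / p)"
    by (simp add: lp_norm_finite_support[OF S supp])
  also have "\<dots> = real K powr (1 / p) * c"
    using p c by (simp add: powr_mult powr_powr)
  also have "\<dots> \<le> real K * c"
  proof (cases "K = 0")
    case False
    then have "real K powr (1 / p) \<le> real K powr 1"
      by (intro powr_mono) (use p in auto)
    then show ?thesis
      using c by (simp add: mult_right_mono)
  qed simp
  finally show ?thesis .
qed

lemma Max0_ge: "finite S \<Longrightarrow> e \<in> S \<Longrightarrow> e \<le> Max0 S"
  unfolding Max0_def by auto

lemma Max0_nonneg: "finite S \<Longrightarrow> (\<And>e. e \<in> S \<Longrightarrow> 0 \<le> e) \<Longrightarrow> 0 \<le> Max0 S"
  unfolding Max0_def by (auto intro: order.trans[OF _ Max_ge])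

lemma finite_image_set_dependent:
  assumes "finite L" "\<And>l. l \<in> L \<Longrightarrow> finite (J l)" "\<And>l j. P l j \<Longrightarrow> l \<in> L \<and> j \<in> J l"
  shows "finite {F l j | l j. P l j}"
  by (rule finite_subset[of _ "\<Union>l\<in>L. F l ` J l"]) (use assms in blast)+

lemma funpow_image_subset: "f ` A \<subseteq> A \<Longrightarrow> (f ^^ n) ` A \<subseteq> A"
  by (induction n) auto

lemma strict_mono_on_funpow:
  assumes "strict_mono_on A f" "f ` A \<subseteq> A"
  shows "strict_mono_on A (f ^^ n)"
proof (induction n)
  case (Suc n)
  then show ?case
    using assms funpow_image_subset[OF assms(2), of n]
    by (force simp: strict_mono_on_def image_subset_iff)
qed (simp add: strict_mono_on_def)

lemma pseudo_shift_data_image: "pseudo_shift_data f w \<Longrightarrow> f ` {1..} \<subseteq> {1..}"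
  unfolding pseudo_shift_data_def strict_mono_on_def
  by (force simp: le_less)

lemma pseudo_shift_data_inj_on_funpow:
  assumes "pseudo_shift_data f w"
  shows "inj_on (f ^^ n) {1..}"
proof -
  have "strict_mono_on {1..} (f ^^ n)"
    using assms pseudo_shift_data_image
    by (intro strict_mono_on_funpow) (auto simp: pseudo_shift_data_def)
  then show ?thesis
    by (rule strict_mono_on_imp_inj_on)
qed

lemma finv_funpow:
  assumes "pseudo_shift_data f w" "1 \<le> k"
  shows "finv f n ((f ^^ n) k) = k"
  unfolding finv_def using pseudo_shift_data_inj_on_funpow[OF assms(1)] assms(2) by simp

lemma Wprod_Suc: "Wprod f w m (Suc n) = w (f m) * Wprod f w (f m) n"
proof -
  have "Wprod f w m (Suc n) = w (f m) * (\<Prod>\<nu>=Suc 1..Suc n. w ((f ^^ \<nu>) m))"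
    unfolding Wprod_def by (subst prod.atLeast_Suc_atMost) auto
  also have "(\<Prod>\<nu>=Suc 1..Suc n. w ((f ^^ \<nu>) m)) = Wprod f w (f m) n"
    unfolding Wprod_def prod.shift_bounds_cl_Suc_ivl by (simp add: funpow_swap1)
  finally show ?thesis .
qed

lemma Wprod_nonzero:
  assumes "pseudo_shift_data f w" "1 \<le> m"
  shows "Wprod f w m n \<noteq> 0"
  using assms(2)
proof (induction n arbitrary: m)
  case (Suc n)
  then show ?case
    using assms(1) pseudo_shift_data_image[OF assms(1)]
    by (auto simp: Wprod_Suc pseudo_shift_data_def)
qed (simp add: Wprod_def)

lemma pseudo_shift_funpow:
  assumes "f ` {1..} \<subseteq> {1..}" "1 \<le> m"
  shows "(pseudo_shift f w ^^ n) z m = Wprod f w m n * z ((f ^^ n) m)"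
  using assms(2)
proof (induction n arbitrary: m)
  case (Suc n)
  have "1 \<le> f m"
    using assms(1) Suc.prems by auto
  then show ?case
    using Suc by (simp add: pseudo_shift_def Wprod_Suc funpow_swap1)
qed (simp add: Wprod_def)

locale pseudo_shift_family =
  fixes p :: real and N n M :: nat
    and f :: "nat \<Rightarrow> nat \<Rightarrow> nat" and w :: "nat \<Rightarrow> nat \<Rightarrow> 'a::real_normed_field"
    and x :: "nat \<Rightarrow> nat \<Rightarrow> 'a"
  assumes p: "1 \<le> p" and N: "1 \<le> N"
    and data: "\<And>i. i \<in> {1..N} \<Longrightarrow> pseudo_shift_data (f i) (w i)"
    and xnz: "\<And>i m. i \<in> {1..N} \<Longrightarrow> m \<in> {1..M} \<Longrightarrow> x i m \<noteq> 0"
    and xsupp: "\<And>i m. i \<in> {1..N} \<Longrightarrow> m \<notin> {1..M} \<Longrightarrow> x i m = 0"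
begin

definition Gamma :: real where
  "Gamma = Max ((\<lambda>i. lp_norm p (x i)) ` {1..N})"

definition targets :: "nat set" where
  "targets = (\<Union>i\<in>{1..N}. (f i ^^ n) ` {1..M})"

definition owner :: "nat \<Rightarrow> nat" where
  "owner j = (LEAST i. i \<in> {1..N} \<and> j \<in> (f i ^^ n) ` {1..M})"

definition approx_preimage :: "nat \<Rightarrow> 'a" where
  "approx_preimage j =
    (if j \<in> targets then x (owner j) (finv (f (owner j)) n j) /
       Wprod (f (owner j)) (w (owner j)) (finv (f (owner j)) n j) n
     else 0)"

definition inverse_weights :: "real set" where
  "inverse_weights = {inverse (norm (Wprod (f l) (w l) m n)) | l m. l \<in> {1..N} \<and> m \<in> {1..M}}"

definition mismatch :: "nat \<Rightarrow> real set" where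
  "mismatch i = {norm (Wprod (f i) (w i) (finv (f i) n j) n / Wprod (f l) (w l) (finv (f l) n j) n
                  - x i (finv (f i) n j) / x l (finv (f l) n j)) | l j.
              l \<in> {1..i-1} \<and> j \<in> (f l ^^ n) ` {1..M} \<inter> (f i ^^ n) ` {1..M}}"

definition leakage :: "nat \<Rightarrow> real set" where
  "leakage i = {norm (Wprod (f i) (w i) (finv (f i) n j) n / Wprod (f l) (w l) (finv (f l) n j) n) | l j.
              l \<in> {1..N} \<and> l \<noteq> i \<and> j \<in> (f l ^^ n) ` {1..M} \<inter> (f i ^^ n) ` ({1..} - {1..M})}"

lemma Gamma_nonneg: "0 \<le> Gamma"
  unfolding Gamma_def using N
  by (intro order.trans[OF lp_norm_nonneg Max_ge[of _ "lp_norm p (x 1)"]]) auto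

lemma norm_le_Gamma:
  assumes "i \<in> {1..N}"
  shows "norm (x i k) \<le> Gamma"
proof (cases "k \<in> {1..M}")
  case True
  have "norm (x i k) \<le> lp_norm p (x i)"
    by (rule norm_le_lp_norm[OF p _ _ _ True]) (use xsupp assms in auto)
  also have "\<dots> \<le> Gamma"
    unfolding Gamma_def using assms by auto
  finally show ?thesis .
qed (use xsupp assms Gamma_nonneg in auto)

lemma funpow_image_atLeast_1: "i \<in> {1..N} \<Longrightarrow> (f i ^^ n) ` {1..} \<subseteq> {1..}"
  by (intro funpow_image_subset pseudo_shift_data_image[of _ "w i"] data)

lemma finite_targets: "finite targets"
  unfolding targets_def by auto

lemma targets_subset: "targets \<subseteq> {1..}"
  unfolding targets_def using funpow_image_atLeast_1 by fastforce

lemma card_targets: "card targets \<le> N * M"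
proof -
  have "card targets \<le> (\<Sum>i\<in>{1..N}. card ((f i ^^ n) ` {1..M}))"
    unfolding targets_def by (rule card_UN_le) auto
  also have "\<dots> \<le> (\<Sum>i\<in>{1..N}. M)"
    by (rule sum_mono) (metis card_atLeastAtMost card_image_le finite_atLeastAtMost diff_Suc_1)
  finally show ?thesis by simp
qed

lemma finv_on_image:
  assumes "i \<in> {1..N}" "j \<in> (f i ^^ n) ` {1..M}"
  shows "finv (f i) n j \<in> {1..M}" "(f i ^^ n) (finv (f i) n j) = j"
proof -
  obtain k where "k \<in> {1..M}" "j = (f i ^^ n) k"
    using assms(2) by blast
  then show "finv (f i) n j \<in> {1..M}" "(f i ^^ n) (finv (f i) n j) = j"
    using finv_funpow[OF data[OF assms(1)]] by auto
qed

lemma owner_mem: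
  assumes "j \<in> targets"
  shows "owner j \<in> {1..N}" "j \<in> (f (owner j) ^^ n) ` {1..M}"
proof -
  have "\<exists>i. i \<in> {1..N} \<and> j \<in> (f i ^^ n) ` {1..M}"
    using assms unfolding targets_def by blast
  then show "owner j \<in> {1..N}" "j \<in> (f (owner j) ^^ n) ` {1..M}"
    unfolding owner_def by (metis (no_types, lifting) LeastI_ex)+
qed

lemma owner_le: "i \<in> {1..N} \<Longrightarrow> j \<in> (f i ^^ n) ` {1..M} \<Longrightarrow> owner j \<le> i"
  unfolding owner_def by (rule Least_le) blast

lemma in_span_basis_approx_preimage: "in_span_basis approx_preimage"
proof -
  have "{m. approx_preimage m \<noteq> 0} \<subseteq> targets"
    unfolding approx_preimage_def by auto
  then show ?thesis
    unfolding in_span_basis_def using targets_subset finite_targets finite_subset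
    by (auto simp: approx_preimage_def)
qed

lemma finite_mismatch: "finite (mismatch i)"
  unfolding mismatch_def
  by (rule finite_image_set_dependent[of "{1..i-1}" "\<lambda>l. (f l ^^ n) ` {1..M}"]) auto

lemma finite_leakage: "finite (leakage i)"
  unfolding leakage_def
  by (rule finite_image_set_dependent[of "{1..N}" "\<lambda>l. (f l ^^ n) ` {1..M}"]) auto

lemma Max0_mismatch_nonneg: "0 \<le> Max0 (mismatch i)"
  by (rule Max0_nonneg[OF finite_mismatch]) (auto simp: mismatch_def)

lemma Max0_leakage_nonneg: "0 \<le> Max0 (leakage i)"
  by (rule Max0_nonneg[OF finite_leakage]) (auto simp: leakage_def)

lemma lp_norm_approx_preimage_le:
  "lp_norm p approx_preimage \<le> real M * real N * Gamma * Max0 inverse_weights"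
proof -
  have finite_weights: "finite inverse_weights"
    unfolding inverse_weights_def by (rule finite_image_set2) auto
  have "lp_norm p approx_preimage \<le> real (N * M) * (Gamma * Max0 inverse_weights)"
  proof (rule lp_norm_le_card_mult[OF p finite_targets targets_subset card_targets])
    show "approx_preimage j = 0" if "j \<notin> targets" for j
      using that by (simp add: approx_preimage_def)
    show "0 \<le> Gamma * Max0 inverse_weights"
      using Gamma_nonneg Max0_nonneg[OF finite_weights]
      by (force simp: inverse_weights_def)
  next
    fix j assume j: "j \<in> targets"
    define l where "l = owner j"
    define k where "k = finv (f l) n j"
    have l: "l \<in> {1..N}" and k: "k \<in> {1..M}"
      using owner_mem[OF j] finv_on_image unfolding l_def k_def by blast+
    have "norm (approx_preimage j) = norm (x l k) * inverse (norm (Wprod (f l) (w l) k n))"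
      using j by (simp add: approx_preimage_def l_def k_def divide_inverse norm_mult norm_inverse)
    also have "\<dots> \<le> Gamma * Max0 inverse_weights"
    proof (rule mult_mono)
      show "inverse (norm (Wprod (f l) (w l) k n)) \<le> Max0 inverse_weights"
        by (rule Max0_ge[OF finite_weights]) (use l k in \<open>auto simp: inverse_weights_def\<close>)
    qed (use Gamma_nonneg norm_le_Gamma[OF l] in auto)
    finally show "norm (approx_preimage j) \<le> Gamma * Max0 inverse_weights" .
  qed
  then show ?thesis
    by (simp add: mult_ac)
qed

lemma funpow_approx_preimage:
  assumes "i \<in> {1..N}" "1 \<le> k"
  shows "(pseudo_shift (f i) (w i) ^^ n) approx_preimage k =
    Wprod (f i) (w i) k n * approx_preimage ((f i ^^ n) k)"
  using pseudo_shift_funpow[OF pseudo_shift_data_image[OF data[OF assms(1)]] assms(2)] .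

lemma error_entry_outside_targets:
  assumes i: "i \<in> {1..N}" and k: "1 \<le> k" and j: "(f i ^^ n) k \<notin> targets"
  shows "(pseudo_shift (f i) (w i) ^^ n) approx_preimage k - x i k = 0"
proof -
  have "k \<notin> {1..M}"
    using i j unfolding targets_def by blast
  then show ?thesis
    using j xsupp[OF i] by (simp add: funpow_approx_preimage[OF i k] approx_preimage_def)
qed

lemma error_entry_owned:
  assumes i: "i \<in> {1..N}" and k: "1 \<le> k" and j: "(f i ^^ n) k \<in> targets"
    and own: "owner ((f i ^^ n) k) = i"
  shows "(pseudo_shift (f i) (w i) ^^ n) approx_preimage k - x i k = 0"
  using j own Wprod_nonzero[OF data[OF i] k]
  by (simp add: funpow_approx_preimage[OF i k] approx_preimage_def finv_funpow[OF data[OF i] k])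

lemma error_entry_foreign:
  assumes i: "i \<in> {1..N}" and k: "1 \<le> k" and j: "(f i ^^ n) k = j" "j \<in> targets"
    and l: "owner j = l" "l \<noteq> i"
  shows "(pseudo_shift (f i) (w i) ^^ n) approx_preimage k - x i k =
    x l (finv (f l) n j) * (Wprod (f i) (w i) (finv (f i) n j) n / Wprod (f l) (w l) (finv (f l) n j) n
      - x i (finv (f i) n j) / x l (finv (f l) n j))"
proof -
  have l_mem: "l \<in> {1..N}" and k': "finv (f l) n j \<in> {1..M}"
    using owner_mem[OF j(2)] finv_on_image l by blast+
  have "finv (f i) n j = k"
    using finv_funpow[OF data[OF i] k, of n] j(1) by simp
  moreover have "Wprod (f i) (w i) k n \<noteq> 0" "Wprod (f l) (w l) (finv (f l) n j) n \<noteq> 0"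
    using Wprod_nonzero[OF data[OF i] k] Wprod_nonzero[OF data[OF l_mem]] k' by auto
  moreover have "x l (finv (f l) n j) \<noteq> 0"
    using xnz[OF l_mem k'] .
  ultimately show ?thesis
    using j l by (simp add: funpow_approx_preimage[OF i k] approx_preimage_def field_simps)
qed

lemma norm_foreign_ratio_le:
  assumes i: "i \<in> {1..N}" and k: "1 \<le> k" and j: "(f i ^^ n) k = j" "j \<in> targets"
    and l: "owner j = l" "l \<noteq> i"
  shows "norm (Wprod (f i) (w i) (finv (f i) n j) n / Wprod (f l) (w l) (finv (f l) n j) n
      - x i (finv (f i) n j) / x l (finv (f l) n j)) \<le> Max0 (mismatch i) + Max0 (leakage i)"
    (is "norm ?d \<le> _")
proof -
  have l_mem: "l \<in> {1..N}" and j_l: "j \<in> (f l ^^ n) ` {1..M}"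
    using owner_mem[OF j(2)] l by auto
  have j_i: "finv (f i) n j = k"
    using finv_funpow[OF data[OF i] k, of n] j(1) by simp
  show ?thesis
  proof (cases "k \<in> {1..M}")
    case True
    then have "l \<in> {1..i-1}"
      using owner_le[OF i] j l l_mem by force
    moreover have "j \<in> (f i ^^ n) ` {1..M}"
      using j(1) True by blast
    ultimately have "norm ?d \<in> mismatch i"
      using j_l unfolding mismatch_def by blast
    from Max0_ge[OF finite_mismatch this] show ?thesis
      using Max0_leakage_nonneg[of i] by linarith
  next
    case False
    have "j \<in> (f i ^^ n) ` ({1..} - {1..M})"
      using j(1) k False by blast
    then have "norm (Wprod (f i) (w i) (finv (f i) n j) n / Wprod (f l) (w l) (finv (f l) n j) n)
        \<in> leakage i"
      using j_l l l_mem unfolding leakage_def by blast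
    moreover have "x i (finv (f i) n j) = 0"
      using xsupp[OF i False] j_i by simp
    ultimately have "norm ?d \<in> leakage i"
      by simp
    from Max0_ge[OF finite_leakage this] show ?thesis
      using Max0_mismatch_nonneg[of i] by linarith
  qed
qed

lemma norm_error_entry_le:
  assumes i: "i \<in> {1..N}" and k: "1 \<le> k"
  shows "norm ((pseudo_shift (f i) (w i) ^^ n) approx_preimage k - x i k)
    \<le> Gamma * (Max0 (mismatch i) + Max0 (leakage i))"
proof -
  define j where "j = (f i ^^ n) k"
  define l where "l = owner j"
  have bound_nonneg: "0 \<le> Gamma * (Max0 (mismatch i) + Max0 (leakage i))"
    using Gamma_nonneg Max0_mismatch_nonneg Max0_leakage_nonneg by simp
  consider "j \<notin> targets" | "j \<in> targets" "l = i" | "j \<in> targets" "l \<noteq> i"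
    by blast
  then show ?thesis
  proof cases
    case 3
    have "l \<in> {1..N}"
      using owner_mem[OF 3(1)] unfolding l_def by auto
    then show ?thesis
      using error_entry_foreign[OF i k j_def[symmetric] 3(1) l_def[symmetric] 3(2)]
        norm_foreign_ratio_le[OF i k j_def[symmetric] 3(1) l_def[symmetric] 3(2)]
        norm_le_Gamma Gamma_nonneg
      by (simp add: norm_mult mult_mono)
  qed (use error_entry_outside_targets[OF i k] error_entry_owned[OF i k] bound_nonneg
       j_def l_def in auto)
qed

lemma lp_norm_error_le:
  assumes i: "i \<in> {1..N}"
  shows "lp_norm p (\<lambda>k. (pseudo_shift (f i) (w i) ^^ n) approx_preimage k - x i k)
    \<le> real M * real N * Gamma * Max0 (mismatch i) + real M * real N * Gamma * Max0 (leakage i)"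
proof -
  define S where "S = {k \<in> {1..}. (f i ^^ n) k \<in> targets}"
  have inj: "inj_on (f i ^^ n) S"
    using pseudo_shift_data_inj_on_funpow[OF data[OF i]] by (rule inj_on_subset) (auto simp: S_def)
  have maps: "(f i ^^ n) ` S \<subseteq> targets"
    unfolding S_def by auto
  have "lp_norm p (\<lambda>k. (pseudo_shift (f i) (w i) ^^ n) approx_preimage k - x i k)
    \<le> real (N * M) * (Gamma * (Max0 (mismatch i) + Max0 (leakage i)))"
  proof (rule lp_norm_le_card_mult[OF p])
    show "finite S"
      by (rule inj_on_finite[OF inj maps finite_targets])
    show "card S \<le> N * M"
      using card_inj_on_le[OF inj maps finite_targets] card_targets by simp
  qed (use error_entry_outside_targets[OF i] norm_error_entry_le[OF i]
      Gamma_nonneg Max0_mismatch_nonneg Max0_leakage_nonneg in \<open>auto simp: S_def\<close>)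
  then show ?thesis
    by (simp add: algebra_simps)
qed

end

theorem lemma2p5:
  fixes p :: real and N n M :: nat
    and f :: "nat \<Rightarrow> nat \<Rightarrow> nat" and w :: "nat \<Rightarrow> nat \<Rightarrow> 'a::real_normed_field"
    and x :: "nat \<Rightarrow> nat \<Rightarrow> 'a"
  assumes p: "1 \<le> p" and N: "2 \<le> N" and n: "1 \<le> n" and M: "1 \<le> M"
    and data: "\<And>i. i \<in> {1..N} \<Longrightarrow> pseudo_shift_data (f i) (w i)"
    and xnz: "\<And>i m. i \<in> {1..N} \<Longrightarrow> m \<in> {1..M} \<Longrightarrow> x i m \<noteq> 0"
    and xsupp: "\<And>i m. i \<in> {1..N} \<Longrightarrow> m \<notin> {1..M} \<Longrightarrow> x i m = 0"
  shows "\<exists>z. in_span_basis z \<and>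
    lp_norm p z \<le> real M * real N * Max ((\<lambda>i. lp_norm p (x i)) ` {1..N}) *
       Max0 {inverse (norm (Wprod (f l) (w l) m n)) | l m. l \<in> {1..N} \<and> m \<in> {1..M}} \<and>
    lp_norm p (\<lambda>k. (pseudo_shift (f 1) (w 1) ^^ n) z k - x 1 k) \<le>
       real M * real N * Max ((\<lambda>i. lp_norm p (x i)) ` {1..N}) *
       Max0 {norm (Wprod (f 1) (w 1) (finv (f 1) n j) n / Wprod (f l) (w l) (finv (f l) n j) n) | l j.
              l \<in> {2..N} \<and> j \<in> (f l ^^ n) ` {1..M} \<inter> (f 1 ^^ n) ` ({1..} - {1..M})} \<and>
    (\<forall>i\<in>{2..N}.
      lp_norm p (\<lambda>k. (pseudo_shift (f i) (w i) ^^ n) z k - x i k) \<le>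
       real M * real N * Max ((\<lambda>i. lp_norm p (x i)) ` {1..N}) *
       Max0 {norm (Wprod (f i) (w i) (finv (f i) n j) n / Wprod (f l) (w l) (finv (f l) n j) n
                  - x i (finv (f i) n j) / x l (finv (f l) n j)) | l j.
              l \<in> {1..i-1} \<and> j \<in> (f l ^^ n) ` {1..M} \<inter> (f i ^^ n) ` {1..M}}
       + real M * real N * Max ((\<lambda>i. lp_norm p (x i)) ` {1..N}) *
       Max0 {norm (Wprod (f i) (w i) (finv (f i) n j) n / Wprod (f l) (w l) (finv (f l) n j) n) | l j.
              l \<in> {1..N} \<and> l \<noteq> i \<and> j \<in> (f l ^^ n) ` {1..M} \<inter> (f i ^^ n) ` ({1..} - {1..M})})"
proof -
  interpret pseudo_shift_family p N n M f w x
    by unfold_locales (use assms in auto)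
  have "(l \<in> {1..N} \<and> l \<noteq> 1 \<and> Q) \<longleftrightarrow> (l \<in> {2..N} \<and> Q)" for l Q
    by auto
  then have leakage_1: "leakage 1 = {norm (Wprod (f 1) (w 1) (finv (f 1) n j) n / Wprod (f l) (w l) (finv (f l) n j) n) | l j.
              l \<in> {2..N} \<and> j \<in> (f l ^^ n) ` {1..M} \<inter> (f 1 ^^ n) ` ({1..} - {1..M})}"
    unfolding leakage_def by presburger
  have "mismatch 1 = {}"
    by (simp add: mismatch_def)
  then have error_1: "lp_norm p (\<lambda>k. (pseudo_shift (f 1) (w 1) ^^ n) approx_preimage k - x 1 k)
    \<le> real M * real N * Gamma * Max0 (leakage 1)"
    using lp_norm_error_le[of 1] N by (simp add: Max0_def)
  note bounds = lp_norm_approx_preimage_le error_1[unfolded leakage_1] lp_norm_error_le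
  show ?thesis
    by (intro exI[of _ approx_preimage] conjI ballI in_span_basis_approx_preimage
        bounds[unfolded Gamma_def inverse_weights_def mismatch_def leakage_def]) auto
qed

end
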